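(* For each $*\in\{\mathrm{nc},\mathrm{c},\mathrm{cr},\mathrm{u},\mathrm{cu},\mathrm{cur}\}$ the functor $\mathfrak{P}^*:\mathbf{A}_*\to\mathbf{A}_*$ is homotopy invariant: if $f,g:A\to B$ are homotopic morphisms in $\mathbf{A}_*$, then $\mathfrak{P}^*(f)=\mathfrak{P}^*(g)$.
   Context: Fix a field $\mathbb{F}$; algebras are associative $\mathbb{F}$-algebras. $\mathbf{A}_{\mathrm{nc}}$: all algebras; $\mathbf{A}_{\mathrm{c}},\mathbf{A}_{\mathrm{cr}}$: commutative, resp. commutative reduced algebras; $\mathbf{A}_{\mathrm{u}}$: unital algebras with unit-preserving morphisms; $\mathbf{A}_{\mathrm{cu}},\mathbf{A}_{\mathrm{cur}}$: commutative, resp. commutative reduced unital algebras. For $*\in\{\mathrm{nc},\mathrm{c},\mathrm{cr}\}$ and $A\in\mathbf{A}_{\mathrm{nc}}$ (resp. $*\in\{\mathrm{u},\mathrm{cu},\mathrm{cur}\}$ and $A\in\mathbf{A}_{\mathrm{u}}$), $\mathfrak{P}^*(A)$ is the set of $a\in A$ such that for every $C\in\mathbf{A}_*$ and every algebra morphism (resp. unit-preserving morphism) $\varphi:A\to C[x]$, $\varphi(a)$ is a constant polynomial, i.e. lies in $C\subseteq C[x]$. (The paper defines $\mathfrak{P}^*(A)$ as the equalizer of two maps $A\to\varprojlim\mathfrak{M}^*_{A,\mathbb{F}[x]}$ induced by evaluation at $x=0$ and $x=1$, and proves it equals this set.) $\mathfrak{P}^*(A)$ is a subalgebra of $A$ and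 every morphism $f:A\to B$ maps $\mathfrak{P}^*(A)$ into $\mathfrak{P}^*(B)$; $\mathfrak{P}^*(f):=f|_{\mathfrak{P}^*(A)}$. Homotopy: for $B\in\mathbf{A}_*$, $B[x]=B\otimes\mathbb{F}[x]$, $\mathrm{p}_0,\mathrm{p}_1:B[x]\to B$ are evaluations at $0,1$; $f,g:A\to B$ are elementary homotopic in $\mathbf{A}_*$ if there is a morphism $H:A\to B[x]$ in $\mathbf{A}_*$ with $\mathrm{p}_0H=f$, $\mathrm{p}_1H=g$, and homotopic if connected by a finite chain of elementary homotopies. *)

theory Defs
  imports Main
begin

text \<open>Algebras over a field 'k, given by a carrier set inside a type 'a together with
  operations.  The field \<open>one\<close> is only relevant in the unital categories.\<close>

record ('k, 'a) alg =
  carrier :: "'a set"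
  zero :: 'a
  plus :: "'a \<Rightarrow> 'a \<Rightarrow> 'a"
  mult :: "'a \<Rightarrow> 'a \<Rightarrow> 'a"
  smult :: "'k \<Rightarrow> 'a \<Rightarrow> 'a"
  one :: 'a

definition alg :: "('k::field, 'a) alg \<Rightarrow> bool" where
  "alg A \<longleftrightarrow>
     zero A \<in> carrier A \<and>
     (\<forall>a\<in>carrier A. \<forall>b\<in>carrier A. plus A a b \<in> carrier A) \<and>
     (\<forall>a\<in>carrier A. \<forall>b\<in>carrier A. mult A a b \<in> carrier A) \<and>
     (\<forall>c. \<forall>a\<in>carrier A. smult A c a \<in> carrier A) \<and>
     (\<forall>a\<in>carrier A. \<forall>b\<in>carrier A. \<forall>d\<in>carrier A. plus A (plus A a b) d = plus A a (plus A b d)) \<and>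
     (\<forall>a\<in>carrier A. \<forall>b\<in>carrier A. plus A a b = plus A b a) \<and>
     (\<forall>a\<in>carrier A. plus A (zero A) a = a) \<and>
     (\<forall>a\<in>carrier A. plus A a (smult A (-1) a) = zero A) \<and>
     (\<forall>a\<in>carrier A. smult A 1 a = a) \<and>
     (\<forall>c d. \<forall>a\<in>carrier A. smult A (c * d) a = smult A c (smult A d a)) \<and>
     (\<forall>c d. \<forall>a\<in>carrier A. smult A (c + d) a = plus A (smult A c a) (smult A d a)) \<and>
     (\<forall>c. \<forall>a\<in>carrier A. \<forall>b\<in>carrier A. smult A c (plus A a b) = plus A (smult A c a) (smult A c b)) \<and>
     (\<forall>a\<in>carrier A. \<forall>b\<in>carrier A. \<forall>d\<in>carrier A. mult A (mult A a b) d = mult A a (mult A b d)) \<and>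
     (\<forall>a\<in>carrier A. \<forall>b\<in>carrier A. \<forall>d\<in>carrier A. mult A a (plus A b d) = plus A (mult A a b) (mult A a d)) \<and>
     (\<forall>a\<in>carrier A. \<forall>b\<in>carrier A. \<forall>d\<in>carrier A. mult A (plus A a b) d = plus A (mult A a d) (mult A b d)) \<and>
     (\<forall>c. \<forall>a\<in>carrier A. \<forall>b\<in>carrier A. smult A c (mult A a b) = mult A (smult A c a) b) \<and>
     (\<forall>c. \<forall>a\<in>carrier A. \<forall>b\<in>carrier A. smult A c (mult A a b) = mult A a (smult A c b))"

text \<open>\<open>npow A a n\<close> is the power $a^{n+1}$ (no unit needed).\<close>
primrec npow :: "('k, 'a) alg \<Rightarrow> 'a \<Rightarrow> nat \<Rightarrow> 'a" where
  "npow A a 0 = a"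
| "npow A a (Suc n) = mult A a (npow A a n)"

definition commutative :: "('k, 'a) alg \<Rightarrow> bool" where
  "commutative A \<longleftrightarrow> (\<forall>a\<in>carrier A. \<forall>b\<in>carrier A. mult A a b = mult A b a)"

definition reduced :: "('k, 'a) alg \<Rightarrow> bool" where
  "reduced A \<longleftrightarrow> (\<forall>a\<in>carrier A. \<forall>n. npow A a n = zero A \<longrightarrow> a = zero A)"

definition unital_alg :: "('k, 'a) alg \<Rightarrow> bool" where
  "unital_alg A \<longleftrightarrow> one A \<in> carrier A \<and>
     (\<forall>a\<in>carrier A. mult A (one A) a = a \<and> mult A a (one A) = a)"

datatype cat = NC | Cm | CR | U | CU | CUR

definition is_unital_cat :: "cat \<Rightarrow> bool" where
  "is_unital_cat k \<longleftrightarrow> k \<in> {U, CU, CUR}"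

definition in_cat :: "cat \<Rightarrow> ('k::field, 'a) alg \<Rightarrow> bool" where
  "in_cat k A \<longleftrightarrow> alg A
     \<and> (k \<in> {Cm, CR, CU, CUR} \<longrightarrow> commutative A)
     \<and> (k \<in> {CR, CUR} \<longrightarrow> reduced A)
     \<and> (is_unital_cat k \<longrightarrow> unital_alg A)"

definition mor :: "cat \<Rightarrow> ('k, 'a) alg \<Rightarrow> ('k, 'b) alg \<Rightarrow> ('a \<Rightarrow> 'b) \<Rightarrow> bool" where
  "mor k A B f \<longleftrightarrow>
     (\<forall>a\<in>carrier A. f a \<in> carrier B) \<and>
     (\<forall>a\<in>carrier A. \<forall>b\<in>carrier A. f (plus A a b) = plus B (f a) (f b)) \<and>
     (\<forall>a\<in>carrier A. \<forall>b\<in>carrier A. f (mult A a b) = mult B (f a) (f b)) \<and>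
     (\<forall>c. \<forall>a\<in>carrier A. f (smult A c a) = smult B c (f a)) \<and>
     (is_unital_cat k \<longrightarrow> f (one A) = one B)"

text \<open>Polynomial algebra C[x]: coefficient sequences with finite support.\<close>
primrec asum :: "('k, 'c) alg \<Rightarrow> (nat \<Rightarrow> 'c) \<Rightarrow> nat \<Rightarrow> 'c" where
  "asum C p 0 = zero C"
| "asum C p (Suc n) = plus C (asum C p n) (p n)"

definition poly_alg :: "('k, 'c) alg \<Rightarrow> ('k, nat \<Rightarrow> 'c) alg" where
  "poly_alg C = \<lparr> carrier = {p. (\<forall>n. p n \<in> carrier C) \<and> (\<exists>N. \<forall>n\<ge>N. p n = zero C)},
     zero = (\<lambda>_. zero C),
     plus = (\<lambda>p q n. plus C (p n) (q n)),
     mult = (\<lambda>p q n. asum C (\<lambda>i. mult C (p i) (q (n - i))) (Suc n)),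
     smult = (\<lambda>c p n. smult C c (p n)),
     one = (\<lambda>n. if n = 0 then one C else zero C) \<rparr>"

text \<open>Evaluation at x = 0 and x = 1.\<close>
definition ev0 :: "('k, 'c) alg \<Rightarrow> (nat \<Rightarrow> 'c) \<Rightarrow> 'c" where
  "ev0 C p = p 0"

definition ev1 :: "('k, 'c) alg \<Rightarrow> (nat \<Rightarrow> 'c) \<Rightarrow> 'c" where
  "ev1 C p = asum C p (LEAST N. \<forall>n\<ge>N. p n = zero C)"

definition is_const :: "('k, 'c) alg \<Rightarrow> (nat \<Rightarrow> 'c) \<Rightarrow> bool" where
  "is_const C p \<longleftrightarrow> (\<forall>n\<ge>1. p n = zero C)"

definition elem_homotopic ::
  "cat \<Rightarrow> ('k::field, 'a) alg \<Rightarrow> ('k, 'b) alg \<Rightarrow> ('a \<Rightarrow> 'b) \<Rightarrow> ('a \<Rightarrow> 'b) \<Rightarrow> bool" where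
  "elem_homotopic k A B f g \<longleftrightarrow>
     (\<exists>H. mor k A (poly_alg B) H \<and>
          (\<forall>a\<in>carrier A. ev0 B (H a) = f a \<and> ev1 B (H a) = g a))"

inductive homotopic ::
  "cat \<Rightarrow> ('k::field, 'a) alg \<Rightarrow> ('k, 'b) alg \<Rightarrow> ('a \<Rightarrow> 'b) \<Rightarrow> ('a \<Rightarrow> 'b) \<Rightarrow> bool"
  for k A B where
  refl: "mor k A B f \<Longrightarrow> homotopic k A B f f"
| step: "homotopic k A B f g \<Longrightarrow> mor k A B h \<Longrightarrow>
         elem_homotopic k A B g h \<or> elem_homotopic k A B h g \<Longrightarrow> homotopic k A B f h"

text \<open>Since HOL cannot quantify over all types, the test algebras C
  range over algebras whose carrier lies in the type ('k \<times> 'a \<times> nat) list, whose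
  cardinality max(|k|,|A|,aleph_0) bounds the size of the subalgebra of C generated by the
  coefficients of \<phi>(A); hence this gives the same set as quantifying over all algebras.\<close>
definition P :: "cat \<Rightarrow> ('k::field, 'a) alg \<Rightarrow> 'a set" where
  "P k A = {a \<in> carrier A.
     \<forall>(C :: ('k, ('k \<times> 'a \<times> nat) list) alg) \<phi>.
        in_cat k C \<longrightarrow> mor k A (poly_alg C) \<phi> \<longrightarrow> is_const C (\<phi> a)}"

end

(* For a homotopy H : A -> B[x] and a in P(A), H(a) is a constant polynomial, so evaluating
   at 0 and at 1 gives the same value on a; induction along the chain of elementary
   homotopies gives the theorem.  The catch is that P(A) only tests algebras whose carrier
   lies in the fixed type ('k * 'a * nat) list.  The coefficients of H generate a subalgebra
   of B each of whose elements is computed by a postfix program over that type, with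
   instructions built from scalars, elements of A and degrees.  Choosing a program for each
   element embeds the subalgebra into the type, and transporting the algebra structure along
   this embedding gives a test algebra in which H(a) has to be constant. *)

theory Submission
  imports Defs
begin

definition subalgebra :: "'b set \<Rightarrow> ('k, 'b) alg \<Rightarrow> bool" where
  "subalgebra S B \<longleftrightarrow> S \<subseteq> carrier B \<and> zero B \<in> S \<and>
     (\<forall>a\<in>S. \<forall>b\<in>S. plus B a b \<in> S \<and> mult B a b \<in> S) \<and> (\<forall>c. \<forall>a\<in>S. smult B c a \<in> S)"

inductive_set subalg_gen :: "('k, 'b) alg \<Rightarrow> 'b set \<Rightarrow> 'b set" for B G where
  gen: "x \<in> G \<Longrightarrow> x \<in> subalg_gen B G"
| zero: "zero B \<in> subalg_gen B G"
| plus: "x \<in> subalg_gen B G \<Longrightarrow> y \<in> subalg_gen B G \<Longrightarrow> plus B x y \<in> subalg_gen B G"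
| mult: "x \<in> subalg_gen B G \<Longrightarrow> y \<in> subalg_gen B G \<Longrightarrow> mult B x y \<in> subalg_gen B G"
| smult: "x \<in> subalg_gen B G \<Longrightarrow> smult B c x \<in> subalg_gen B G"

lemma subalgebra_subalg_gen:
  assumes "alg B" and "G \<subseteq> carrier B"
  shows "subalgebra (subalg_gen B G) B"
proof -
  have "subalg_gen B G \<subseteq> carrier B"
  proof
    show "x \<in> carrier B" if "x \<in> subalg_gen B G" for x
      using that assms by induction (auto simp: alg_def)
  qed
  then show ?thesis
    by (auto simp: subalgebra_def intro: subalg_gen.intros)
qed

lemma subalgebra_npow:
  assumes "subalgebra S B" and "b \<in> S"
  shows "npow B b n \<in> S"
  using assms by (induction n) (auto simp: subalgebra_def)

lemma subalgebra_asum: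
  assumes "subalgebra S B" and "\<And>i. p i \<in> S"
  shows "asum B p n \<in> S"
  using assms by (induction n) (auto simp: subalgebra_def)

definition alg_transfer :: "('b \<Rightarrow> 'c) \<Rightarrow> 'b set \<Rightarrow> ('k, 'b) alg \<Rightarrow> ('k, 'c) alg" where
  "alg_transfer h S B =
    \<lparr> carrier = h ` S,
      zero = h (zero B),
      plus = (\<lambda>x y. h (plus B (inv_into S h x) (inv_into S h y))),
      mult = (\<lambda>x y. h (mult B (inv_into S h x) (inv_into S h y))),
      smult = (\<lambda>c x. h (smult B c (inv_into S h x))),
      one = h (one B) \<rparr>"

lemma alg_alg_transfer:
  assumes inj: "inj_on h S" and B: "alg B" and S: "subalgebra S B"
  shows "alg (alg_transfer h S B)"
proof -
  have closed: "zero B \<in> S"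
    "\<And>a b. a \<in> S \<Longrightarrow> b \<in> S \<Longrightarrow> plus B a b \<in> S"
    "\<And>a b. a \<in> S \<Longrightarrow> b \<in> S \<Longrightarrow> mult B a b \<in> S"
    "\<And>c a. a \<in> S \<Longrightarrow> smult B c a \<in> S"
    and "S \<subseteq> carrier B"
    using S by (simp_all add: subalgebra_def)
  show ?thesis
    unfolding alg_def
    apply (simp add: alg_transfer_def inj closed)
    apply (intro conjI ballI allI; rule arg_cong[where f = h])
    using B \<open>S \<subseteq> carrier B\<close> unfolding alg_def by (meson subsetD)+
qed

lemma npow_alg_transfer:
  assumes "inj_on h S" and "subalgebra S B" and "b \<in> S"
  shows "npow (alg_transfer h S B) (h b) n = h (npow B b n)"
  using assms by (induction n) (auto simp: alg_transfer_def subalgebra_npow)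

lemma asum_alg_transfer:
  assumes "inj_on h S" and "subalgebra S B" and "\<And>i. p i \<in> S"
  shows "asum (alg_transfer h S B) (\<lambda>i. h (p i)) n = h (asum B p n)"
  using assms by (induction n) (auto simp: alg_transfer_def subalgebra_asum)

lemma in_cat_alg_transfer:
  assumes inj: "inj_on h S" and B: "in_cat k B" and S: "subalgebra S B"
    and one_S: "is_unital_cat k \<Longrightarrow> one B \<in> S"
  shows "in_cat k (alg_transfer h S B)"
proof -
  let ?T = "alg_transfer h S B"
  have sub: "S \<subseteq> carrier B" and zero_S: "zero B \<in> S"
    and mult_S: "\<And>a b. a \<in> S \<Longrightarrow> b \<in> S \<Longrightarrow> mult B a b \<in> S"
    using S by (auto simp: subalgebra_def)
  have "commutative ?T" if "commutative B"
    using that inj sub mult_S by (auto simp: commutative_def alg_transfer_def subset_iff)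
  moreover have "reduced ?T" if "reduced B"
  proof (unfold reduced_def, intro ballI allI impI)
    fix x n assume "x \<in> carrier ?T" and npow_x: "npow ?T x n = zero ?T"
    then obtain b where b: "b \<in> S" "x = h b"
      by (auto simp: alg_transfer_def)
    with npow_x have "h (npow B b n) = h (zero B)"
      using npow_alg_transfer[OF inj S] by (simp add: alg_transfer_def)
    then have "npow B b n = zero B"
      using inj b(1) zero_S subalgebra_npow[OF S] by (meson inj_onD)
    with \<open>reduced B\<close> b sub show "x = zero ?T"
      by (auto simp: reduced_def alg_transfer_def)
  qed
  moreover have "unital_alg ?T" if "unital_alg B" and "one B \<in> S"
    using that inj sub mult_S by (auto simp: unital_alg_def alg_transfer_def)
  ultimately show ?thesis
    using B S inj one_S alg_alg_transfer by (auto simp: in_cat_def)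
qed

lemma mor_poly_alg_transfer:
  assumes inj: "inj_on h S" and S: "subalgebra S B" and H: "mor k A (poly_alg B) H"
    and coeff_S: "\<And>a n. a \<in> carrier A \<Longrightarrow> H a n \<in> S"
  shows "mor k A (poly_alg (alg_transfer h S B)) (\<lambda>a. h \<circ> H a)"
  unfolding mor_def
proof (intro conjI ballI allI impI)
  fix a assume a: "a \<in> carrier A"
  then obtain N where "\<forall>n\<ge>N. H a n = zero B"
    using H by (auto simp: mor_def poly_alg_def)
  then show "h \<circ> H a \<in> carrier (poly_alg (alg_transfer h S B))"
    using a coeff_S by (auto simp: poly_alg_def alg_transfer_def intro!: exI[of _ N])
next
  fix a b assume a: "a \<in> carrier A" and b: "b \<in> carrier A"
  then have H_plus: "H (plus A a b) = plus (poly_alg B) (H a) (H b)"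
    and H_mult: "H (mult A a b) = mult (poly_alg B) (H a) (H b)"
    using H by (simp_all add: mor_def)
  show "h \<circ> H (plus A a b) = plus (poly_alg (alg_transfer h S B)) (h \<circ> H a) (h \<circ> H b)"
    using a b inj coeff_S by (auto simp: H_plus poly_alg_def alg_transfer_def)
  have mult_S: "mult B (H a i) (H b j) \<in> S" for i j
    using a b coeff_S S by (simp add: subalgebra_def)
  have mult_T: "mult (alg_transfer h S B) (h (H a i)) (h (H b j)) = h (mult B (H a i) (H b j))"
    for i j
    using a b inj coeff_S by (simp add: alg_transfer_def)
  have asum_T: "asum (alg_transfer h S B) (\<lambda>i. h (mult B (H a i) (H b (n - i)))) m
      = h (asum B (\<lambda>i. mult B (H a i) (H b (n - i))) m)" for n m
    by (rule asum_alg_transfer[OF inj S]) (rule mult_S)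
  show "h \<circ> H (mult A a b) = mult (poly_alg (alg_transfer h S B)) (h \<circ> H a) (h \<circ> H b)"
    using mult_T asum_T by (simp add: H_mult poly_alg_def comp_def del: asum.simps)
next
  fix c a assume a: "a \<in> carrier A"
  then have "H (smult A c a) = smult (poly_alg B) c (H a)"
    using H by (simp add: mor_def)
  then show "h \<circ> H (smult A c a) = smult (poly_alg (alg_transfer h S B)) c (h \<circ> H a)"
    using a inj coeff_S by (auto simp: poly_alg_def alg_transfer_def)
next
  assume "is_unital_cat k"
  then have "H (one A) = one (poly_alg B)"
    using H by (simp add: mor_def)
  then show "h \<circ> H (one A) = one (poly_alg (alg_transfer h S B))"
    by (auto simp: poly_alg_def alg_transfer_def)
qed

lemma is_const_alg_transfer:
  assumes "inj_on h S" and "subalgebra S B" and "\<And>n. p n \<in> S"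
    and "is_const (alg_transfer h S B) (h \<circ> p)"
  shows "is_const B p"
  using assms by (auto simp: is_const_def alg_transfer_def subalgebra_def dest: inj_onD)

fun exec :: "('k, 'b) alg \<Rightarrow> ('a \<Rightarrow> nat \<Rightarrow> 'b) \<Rightarrow> 'k \<times> 'a \<times> nat \<Rightarrow> 'b list \<Rightarrow> 'b list"
  where
  "exec B \<gamma> (c, a, 0) st = zero B # st"
| "exec B \<gamma> (c, a, Suc 0) st = (case st of y # x # st' \<Rightarrow> plus B x y # st' | _ \<Rightarrow> st)"
| "exec B \<gamma> (c, a, Suc (Suc 0)) st = (case st of y # x # st' \<Rightarrow> mult B x y # st' | _ \<Rightarrow> st)"
| "exec B \<gamma> (c, a, Suc (Suc (Suc 0))) st =
     (case st of x # st' \<Rightarrow> smult B c x # st' | _ \<Rightarrow> st)"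
| "exec B \<gamma> (c, a, Suc (Suc (Suc (Suc n)))) st = \<gamma> a n # st"

definition computes ::
  "('k, 'b) alg \<Rightarrow> ('a \<Rightarrow> nat \<Rightarrow> 'b) \<Rightarrow> ('k \<times> 'a \<times> nat) list \<Rightarrow> 'b \<Rightarrow> bool" where
  "computes B \<gamma> prog s \<longleftrightarrow> (\<forall>st. fold (exec B \<gamma>) prog st = s # st)"

definition run :: "('k, 'b) alg \<Rightarrow> ('a \<Rightarrow> nat \<Rightarrow> 'b) \<Rightarrow> ('k \<times> 'a \<times> nat) list \<Rightarrow> 'b" where
  "run B \<gamma> prog = hd (fold (exec B \<gamma>) prog [])"

lemma subalg_gen_computed:
  assumes "s \<in> subalg_gen B ((\<lambda>(a, n). \<gamma> a n) ` X)"
  shows "\<exists>prog. computes B \<gamma> prog s"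
  using assms
proof induction
  case (gen x)
  then obtain a n where "x = \<gamma> a n" by auto
  then have "computes B \<gamma> [(undefined, a, Suc (Suc (Suc (Suc n))))] x"
    by (simp add: computes_def)
  then show ?case by blast
next
  case zero
  have "computes B \<gamma> [(undefined, undefined, 0)] (zero B)"
    by (simp add: computes_def)
  then show ?case by blast
next
  case (plus x y)
  then obtain px py where "computes B \<gamma> px x" and "computes B \<gamma> py y"
    by blast
  then have "computes B \<gamma> (px @ py @ [(undefined, undefined, Suc 0)]) (plus B x y)"
    by (simp add: computes_def)
  then show ?case by blast
next
  case (mult x y)
  then obtain px py where "computes B \<gamma> px x" and "computes B \<gamma> py y"
    by blast
  then have "computes B \<gamma> (px @ py @ [(undefined, undefined, Suc (Suc 0))]) (mult B x y)"
    by (simp add: computes_def)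
  then show ?case by blast
next
  case (smult x c)
  then obtain px where "computes B \<gamma> px x"
    by blast
  then have "computes B \<gamma> (px @ [(c, undefined, Suc (Suc (Suc 0)))]) (smult B c x)"
    by (simp add: computes_def)
  then show ?case by blast
qed

lemma subalg_gen_subset_range_run:
  "subalg_gen B ((\<lambda>(a, n). \<gamma> a n) ` X) \<subseteq> range (run B \<gamma>)"
proof
  fix s assume "s \<in> subalg_gen B ((\<lambda>(a, n). \<gamma> a n) ` X)"
  then obtain prog where "computes B \<gamma> prog s"
    using subalg_gen_computed by meson
  then have "run B \<gamma> prog = s"
    by (simp add: computes_def run_def)
  then show "s \<in> range (run B \<gamma>)"
    by blast
qed

lemma is_const_if_in_P:
  fixes A :: "('k::field, 'a) alg" and B :: "('k, 'b) alg"
  assumes A: "in_cat k A" and B: "in_cat k B" and H: "mor k A (poly_alg B) H" and a: "a \<in> P k A"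
  shows "is_const B (H a)"
proof -
  define S where "S = subalg_gen B ((\<lambda>(a, n). H a n) ` (carrier A \<times> UNIV))"
  define h :: "'b \<Rightarrow> ('k \<times> 'a \<times> nat) list" where "h = inv (run B H)"
  have coeff_S: "H x n \<in> S" if "x \<in> carrier A" for x n
    using that unfolding S_def by (intro subalg_gen.gen image_eqI[where x = "(x, n)"]) auto
  have "H x n \<in> carrier B" if "x \<in> carrier A" for x n
    using H that by (simp add: mor_def poly_alg_def)
  then have S: "subalgebra S B"
    unfolding S_def using B by (intro subalgebra_subalg_gen) (auto simp: in_cat_def)
  have one_S: "one B \<in> S" if "is_unital_cat k"
  proof -
    have "one A \<in> carrier A" and "H (one A) = one (poly_alg B)"
      using A H that by (simp_all add: in_cat_def unital_alg_def mor_def)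
    moreover have "one (poly_alg B) 0 = one B"
      by (simp add: poly_alg_def)
    ultimately show ?thesis
      using coeff_S by metis
  qed
  have inj: "inj_on h S"
    unfolding h_def S_def by (intro inj_on_inv_into subalg_gen_subset_range_run)
  have "in_cat k (alg_transfer h S B)"
    using in_cat_alg_transfer[OF inj B S one_S] .
  moreover have "mor k A (poly_alg (alg_transfer h S B)) (\<lambda>a. h \<circ> H a)"
    using mor_poly_alg_transfer[OF inj S H coeff_S] .
  ultimately have "is_const (alg_transfer h S B) (h \<circ> H a)"
    using a unfolding P_def by blast
  moreover have "a \<in> carrier A"
    using a by (simp add: P_def)
  ultimately show ?thesis
    using is_const_alg_transfer[OF inj S] coeff_S by blast
qed

lemma ev1_eq_ev0_if_const:
  assumes "alg B" and "p 0 \<in> carrier B" and "is_const B p"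
  shows "ev1 B p = ev0 B p"
proof -
  let ?N = "LEAST N. \<forall>n\<ge>N. p n = zero B"
  have "?N \<le> 1"
    using \<open>is_const B p\<close> by (simp add: is_const_def Least_le)
  then consider "?N = 0" | "?N = 1" by linarith
  then show ?thesis
  proof cases
    case 1
    then have "p 0 = zero B"
      using LeastI[of "\<lambda>N. \<forall>n\<ge>N. p n = zero B" 1] \<open>is_const B p\<close> by (simp add: is_const_def)
    then show ?thesis using 1 by (simp add: ev1_def ev0_def)
  next
    case 2
    then show ?thesis using assms(1,2) by (simp add: ev1_def ev0_def alg_def)
  qed
qed

lemma elem_homotopic_eq_on_P:
  assumes A: "in_cat k A" and B: "in_cat k B" and "elem_homotopic k A B f g" and a: "a \<in> P k A"
  shows "f a = g a"
proof -
  obtain H where H: "mor k A (poly_alg B) H"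
    and ev: "\<forall>x\<in>carrier A. ev0 B (H x) = f x \<and> ev1 B (H x) = g x"
    using \<open>elem_homotopic k A B f g\<close> unfolding elem_homotopic_def by blast
  have "a \<in> carrier A"
    using a by (simp add: P_def)
  then have "H a 0 \<in> carrier B"
    using H by (simp add: mor_def poly_alg_def)
  moreover have "alg B"
    using B by (simp add: in_cat_def)
  ultimately have "ev1 B (H a) = ev0 B (H a)"
    using ev1_eq_ev0_if_const is_const_if_in_P[OF A B H a] by blast
  then show ?thesis
    using ev \<open>a \<in> carrier A\<close> by simp
qed

theorem mainTheorem8:
  fixes A :: "('k::field, 'a) alg" and B :: "('k, 'b) alg"
    and f g :: "'a \<Rightarrow> 'b" and k :: cat
  assumes "in_cat k A" and "in_cat k B"
    and "homotopic k A B f g"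
  shows "\<forall>a\<in>P k A. f a = g a"
  using assms(3)
proof (induction rule: homotopic.induct)
  case (refl f)
  then show ?case by simp
next
  case (step f g h)
  then show ?case
    using elem_homotopic_eq_on_P[OF assms(1,2)] by metis
qed

end
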